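(* Let $\mathcal{J}=(a,b)$ be a finite interval, $m\geq3$, $\varepsilon\in[0,\varepsilon_0]$, $Q(\cdot;\varepsilon)\in L_1(\mathcal{J};\mathbb{C})$, $\alpha(\varepsilon),\beta(\varepsilon)\in\mathbb{C}^{m\times m}$, and let $A(\cdot;\varepsilon)$ be the matrix function $$A(\cdot;\varepsilon)=\begin{pmatrix} 0&1&0&\cdots&0&0\\ \vdots&\vdots&\ddots&&\vdots&\vdots\\ 0&0&0&\cdots&1&0\\ -i^{-m}Q(\cdot;\varepsilon)&0&0&\cdots&0&1\\ 0&i^{-m}Q(\cdot;\varepsilon)&0&\cdots&0&0 \end{pmatrix}$$ (ones on the superdiagonal, the displayed entries in the last two rows, all other entries zero). Suppose that, for all sufficiently small $\varepsilon$, the boundary value problem $w'=A(\cdot;\varepsilon)w+\varphi$, $\alpha(\varepsilon)w(a)+\beta(\varepsilon)w(b)=0$ has a Green matrix $G(t,s;\varepsilon)=(g_{ij}(t,s;\varepsilon))_{i,j=1}^m\in L_\infty(\mathcal{J}\times\mathcal{J})^{m\times m}$. Then (for such $\varepsilon$) the semi-homogeneous boundary value problem $$i^mD^{[m]}_\varepsilon y=f,\qquad \alpha(\varepsilon)\mathcal{Y}_\varepsilon(a)+\beta(\varepsilon)\mathcal{Y}_\varepsilon(b)=0\qquad(f\in L_2(\mathcal{J};\mathbb{C}))$$ has a Green function $\Gamma(t,s;\varepsilon)$, and $\Gamma(t,s;\varepsilon)=i^{-m}g_{1m}(t,s;\varepsilon)$ for almost all $(t,s)$.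
   Context: Quasi-derivatives: $D^{[k]}_\varepsilon y=y^{(k)}$ for $k=0,\dots,m-2$; $D^{[m-1]}_\varepsilon y=y^{(m-1)}+i^{-m}Q(\cdot;\varepsilon)y$; $D^{[m]}_\varepsilon y=(D^{[m-1]}_\varepsilon y)'-i^{-m}Q(\cdot;\varepsilon)D^{[1]}_\varepsilon y$; $\mathcal{Y}_\varepsilon(x)=(D^{[0]}_\varepsilon y(x),\dots,D^{[m-1]}_\varepsilon y(x))$. A Green matrix of the first-order problem is a matrix function $G$ such that for every $\varphi\in L_1(\mathcal{J})^m$ the problem has the unique solution $w(t)=\int_a^bG(t,s;\varepsilon)\varphi(s)\,ds$. A Green function of the scalar problem is a function $\Gamma$ such that for every $f\in L_2(\mathcal{J};\mathbb{C})$ the problem has the unique solution $y(t)=\int_a^b\Gamma(t,s;\varepsilon)f(s)\,ds$. *)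

theory Defs
  imports "HOL-Analysis.Analysis"
begin

text \<open>Conventions: vectors in C^m are functions nat => complex (only indices < m matter),
  m x m matrices are functions nat => nat => complex (0-based indices).
  The interval J = (a,b); functions are considered on the closed interval [a,b].
  Absolute continuity of u on [a,b] is expressed as u t = u a + integral over [a,t] of an
  L1 function (the a.e. derivative).\<close>

definition L1_on :: "real set \<Rightarrow> (real \<Rightarrow> complex) \<Rightarrow> bool" where
  "L1_on S f \<longleftrightarrow> f absolutely_integrable_on S"

definition L2_on :: "real set \<Rightarrow> (real \<Rightarrow> complex) \<Rightarrow> bool" where
  "L2_on S f \<longleftrightarrow> f measurable_on S \<and> (\<lambda>x. (norm (f x))^2) integrable_on S"

definition Linf_on :: "(real \<times> real) set \<Rightarrow> (real \<times> real \<Rightarrow> complex) \<Rightarrow> bool" where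
  "Linf_on S g \<longleftrightarrow> g measurable_on S \<and> (\<exists>C. AE x in lebesgue. x \<in> S \<longrightarrow> norm (g x) \<le> C)"

definition AC_with_deriv :: "real \<Rightarrow> real \<Rightarrow> (real \<Rightarrow> complex) \<Rightarrow> (real \<Rightarrow> complex) \<Rightarrow> bool" where
  "AC_with_deriv a b u h \<longleftrightarrow> h absolutely_integrable_on {a..b} \<and>
     (\<forall>t\<in>{a..b}. u t = u a + integral {a..t} h)"

definition coeffA :: "nat \<Rightarrow> complex \<Rightarrow> nat \<Rightarrow> nat \<Rightarrow> complex" where
  "coeffA m q i j =
     (if j = Suc i then 1 else 0)
   + (if i = m - 2 \<and> j = 0 then - (inverse (\<i> ^ m)) * q else 0)
   + (if i = m - 1 \<and> j = 1 then inverse (\<i> ^ m) * q else 0)"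

definition fo_solution ::
  "real \<Rightarrow> real \<Rightarrow> nat \<Rightarrow> (real \<Rightarrow> complex) \<Rightarrow> (nat \<Rightarrow> nat \<Rightarrow> complex) \<Rightarrow> (nat \<Rightarrow> nat \<Rightarrow> complex)
   \<Rightarrow> (real \<Rightarrow> nat \<Rightarrow> complex) \<Rightarrow> (real \<Rightarrow> nat \<Rightarrow> complex) \<Rightarrow> bool" where
  "fo_solution a b m Q \<alpha> \<beta> \<phi> w \<longleftrightarrow>
     (\<forall>k<m. \<exists>h. AC_with_deriv a b (\<lambda>t. w t k) h \<and>
        (AE t in lebesgue. t \<in> {a..b} \<longrightarrow>
           h t = (\<Sum>j<m. coeffA m (Q t) k j * w t j) + \<phi> t k)) \<and>
     (\<forall>i<m. (\<Sum>j<m. \<alpha> i j * w a j) + (\<Sum>j<m. \<beta> i j * w b j) = 0)"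

definition green_matrix ::
  "real \<Rightarrow> real \<Rightarrow> nat \<Rightarrow> (real \<Rightarrow> complex) \<Rightarrow> (nat \<Rightarrow> nat \<Rightarrow> complex) \<Rightarrow> (nat \<Rightarrow> nat \<Rightarrow> complex)
   \<Rightarrow> (real \<Rightarrow> real \<Rightarrow> nat \<Rightarrow> nat \<Rightarrow> complex) \<Rightarrow> bool" where
  "green_matrix a b m Q \<alpha> \<beta> G \<longleftrightarrow>
     (\<forall>\<phi>. (\<forall>k<m. L1_on {a..b} (\<lambda>s. \<phi> s k)) \<longrightarrow>
        (\<exists>w. fo_solution a b m Q \<alpha> \<beta> \<phi> w) \<and>
        (\<forall>w. fo_solution a b m Q \<alpha> \<beta> \<phi> w \<longrightarrow>
           (\<forall>t\<in>{a<..<b}. \<forall>k<m. w t k = integral {a..b} (\<lambda>s. \<Sum>j<m. G t s k j * \<phi> s j))))"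

text \<open>y is a solution of i^m D^[m] y = f with alpha Y(a) + beta Y(b) = 0;
  u k stands for the quasi-derivative D^[k] y (k < m).\<close>
definition sc_solution ::
  "real \<Rightarrow> real \<Rightarrow> nat \<Rightarrow> (real \<Rightarrow> complex) \<Rightarrow> (nat \<Rightarrow> nat \<Rightarrow> complex) \<Rightarrow> (nat \<Rightarrow> nat \<Rightarrow> complex)
   \<Rightarrow> (real \<Rightarrow> complex) \<Rightarrow> (real \<Rightarrow> complex) \<Rightarrow> bool" where
  "sc_solution a b m Q \<alpha> \<beta> f y \<longleftrightarrow>
     (\<exists>u :: nat \<Rightarrow> real \<Rightarrow> complex.
        (\<forall>t\<in>{a..b}. u 0 t = y t) \<and>
        (\<forall>k. Suc k < m - 1 \<longrightarrow> AC_with_deriv a b (u k) (u (Suc k))) \<and>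
        (\<exists>h. AC_with_deriv a b (u (m - 2)) h \<and>
           (AE t in lebesgue. t \<in> {a..b} \<longrightarrow> u (m - 1) t = h t + inverse (\<i> ^ m) * Q t * u 0 t)) \<and>
        (\<exists>h. AC_with_deriv a b (u (m - 1)) h \<and>
           (AE t in lebesgue. t \<in> {a..b} \<longrightarrow>
              \<i> ^ m * (h t - inverse (\<i> ^ m) * Q t * u 1 t) = f t)) \<and>
        (\<forall>i<m. (\<Sum>j<m. \<alpha> i j * u j a) + (\<Sum>j<m. \<beta> i j * u j b) = 0))"

definition green_function ::
  "real \<Rightarrow> real \<Rightarrow> nat \<Rightarrow> (real \<Rightarrow> complex) \<Rightarrow> (nat \<Rightarrow> nat \<Rightarrow> complex) \<Rightarrow> (nat \<Rightarrow> nat \<Rightarrow> complex)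
   \<Rightarrow> (real \<Rightarrow> real \<Rightarrow> complex) \<Rightarrow> bool" where
  "green_function a b m Q \<alpha> \<beta> \<Gamma> \<longleftrightarrow>
     (\<forall>f. L2_on {a..b} f \<longrightarrow>
        (\<exists>y. sc_solution a b m Q \<alpha> \<beta> f y) \<and>
        (\<forall>y. sc_solution a b m Q \<alpha> \<beta> f y \<longrightarrow>
           (\<forall>t\<in>{a<..<b}. y t = integral {a..b} (\<lambda>s. \<Gamma> t s * f s))))"

end

theory Submission
  imports Defs
begin

text \<open>Writing \<open>w = (D\<^sup>[0]y, \<dots>, D\<^sup>[m-1]y)\<close>, the scalar problem \<open>i\<^sup>m D\<^sup>[m]y = f\<close> with the
  boundary condition on \<open>\<Y>(a), \<Y>(b)\<close> is literally the first-order problem \<open>w' = A w + \<phi>\<close> with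
  the forcing term \<open>\<phi> = (0, \<dots>, 0, i\<^sup>-\<^sup>m f)\<close>: the first \<open>m-2\<close> rows of \<open>A\<close> encode
  \<open>D\<^sup>[k+1]y = (D\<^sup>[k]y)'\<close>, and its last two rows are the definitions of \<open>D\<^sup>[m-1]\<close> and \<open>D\<^sup>[m]\<close>.
  Since \<open>f \<in> L\<^sub>2 \<subseteq> L\<^sub>1\<close> on a bounded interval, the Green matrix applies to \<open>\<phi>\<close>, and the first
  component of \<open>\<integral> G \<phi>\<close> is \<open>\<integral> g\<^sub>1\<^sub>m i\<^sup>-\<^sup>m f\<close>.\<close>

definition scalar_forcing :: "nat \<Rightarrow> (real \<Rightarrow> complex) \<Rightarrow> real \<Rightarrow> nat \<Rightarrow> complex" where
  "scalar_forcing m f s k = (if k = m - 1 then inverse (\<i> ^ m) * f s else 0)"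

lemma L2_on_imp_absolutely_integrable:
  assumes "L2_on {a..b} f"
  shows "f absolutely_integrable_on {a..b}"
proof (rule measurable_bounded_by_integrable_imp_absolutely_integrable)
  show "f \<in> borel_measurable (lebesgue_on {a..b})"
    using assms measurable_on_iff_borel_measurable[of "{a..b}" f] by (simp add: L2_on_def)
  show "(\<lambda>x. 1 + (norm (f x))\<^sup>2) integrable_on {a..b}"
    using assms by (auto simp: L2_on_def intro: integrable_add)
  show "norm (f x) \<le> 1 + (norm (f x))\<^sup>2" for x
  proof -
    have "0 \<le> (norm (f x) - 1)\<^sup>2"
      by simp
    then have "2 * norm (f x) \<le> 1 + norm (f x) * norm (f x)"
      by (simp add: power2_eq_square algebra_simps)
    then show ?thesis
      using norm_ge_zero[of "f x"] unfolding power2_eq_square by linarith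
  qed
qed simp

lemma AC_with_deriv_AE_cong:
  assumes "AC_with_deriv a b u h"
    and "AE t in lebesgue. t \<in> {a..b} \<longrightarrow> h t = g t"
  shows "AC_with_deriv a b u g"
proof -
  obtain N where N: "negligible N" and exceptional: "{t. \<not> (t \<in> {a..b} \<longrightarrow> h t = g t)} \<subseteq> N"
    using assms(2) unfolding eventually_ae_filter_negligible by blast
  have eq: "g t = h t" if "t \<in> {a..b} - N" for t
    using that exceptional by auto
  have h_int: "h absolutely_integrable_on {a..b}"
    and u_eq: "\<forall>t\<in>{a..b}. u t = u a + integral {a..t} h"
    using assms(1) unfolding AC_with_deriv_def by blast+
  have "g absolutely_integrable_on {a..b}"
    by (rule absolutely_integrable_spike[OF h_int N eq])
  moreover have "integral {a..t} h = integral {a..t} g" if "t \<in> {a..b}" for t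
  proof (rule integral_spike[OF N])
    show "g x = h x" if "x \<in> {a..t} - N" for x
      using that \<open>t \<in> {a..b}\<close> by (intro eq) auto
  qed
  ultimately show ?thesis
    using u_eq unfolding AC_with_deriv_def by metis
qed

lemma sum_coeffA_shift:
  assumes "Suc k < m - 1"
  shows "(\<Sum>j<m. coeffA m q k j * w j) = w (Suc k)"
proof -
  have "(\<Sum>j<m. coeffA m q k j * w j) = (\<Sum>j<m. if j = Suc k then w j else 0)"
    using assms by (intro sum.cong) (auto simp: coeffA_def)
  then show ?thesis
    using assms by simp
qed

lemma sum_coeffA_penultimate:
  assumes "2 \<le> m"
  shows "(\<Sum>j<m. coeffA m q (m - 2) j * w j) = w (m - 1) - inverse (\<i> ^ m) * q * w 0"
proof -
  have "(\<Sum>j<m. coeffA m q (m - 2) j * w j) =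
      (\<Sum>j<m. (if j = m - 1 then w j else 0) + (if j = 0 then - inverse (\<i> ^ m) * q * w j else 0))"
    using assms by (intro sum.cong) (auto simp: coeffA_def)
  then show ?thesis
    using assms by (simp add: sum.distrib)
qed

lemma sum_coeffA_last:
  assumes "2 \<le> m"
  shows "(\<Sum>j<m. coeffA m q (m - 1) j * w j) = inverse (\<i> ^ m) * q * w 1"
proof -
  have "(\<Sum>j<m. coeffA m q (m - 1) j * w j) = (\<Sum>j<m. if j = 1 then inverse (\<i> ^ m) * q * w j else 0)"
    using assms by (intro sum.cong) (auto simp: coeffA_def)
  then show ?thesis
    using assms by simp
qed

lemma sum_mult_scalar_forcing:
  assumes "1 \<le> m"
  shows "(\<Sum>j<m. c j * scalar_forcing m f s j) = c (m - 1) * inverse (\<i> ^ m) * f s"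
proof -
  have "(\<Sum>j<m. c j * scalar_forcing m f s j) = (\<Sum>j<m. if j = m - 1 then c j * inverse (\<i> ^ m) * f s else 0)"
    by (intro sum.cong) (auto simp: scalar_forcing_def)
  then show ?thesis
    using assms by simp
qed

lemma L1_on_scalar_forcing:
  assumes "L2_on {a..b} f"
  shows "L1_on {a..b} (\<lambda>s. scalar_forcing m f s k)"
  using set_integrable_mult_right[OF L2_on_imp_absolutely_integrable[OF assms]]
  by (cases "k = m - 1") (simp_all add: L1_on_def scalar_forcing_def)

lemma fo_solution_imp_sc_solution:
  assumes "2 \<le> m" and "fo_solution a b m Q \<alpha> \<beta> (scalar_forcing m f) w"
  shows "sc_solution a b m Q \<alpha> \<beta> f (\<lambda>t. w t 0)"
proof -
  define u where "u k t = w t k" for k t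
  have row: "\<exists>h. AC_with_deriv a b (u k) h \<and> (AE t in lebesgue. t \<in> {a..b} \<longrightarrow>
      h t = (\<Sum>j<m. coeffA m (Q t) k j * u j t) + scalar_forcing m f t k)" if "k < m" for k
    using assms(2) that unfolding fo_solution_def u_def by blast
  have "AC_with_deriv a b (u k) (u (Suc k))" if k: "Suc k < m - 1" for k
  proof -
    have "k < m"
      using k by linarith
    obtain h where h_AC: "AC_with_deriv a b (u k) h"
      and h: "AE t in lebesgue. t \<in> {a..b} \<longrightarrow>
        h t = (\<Sum>j<m. coeffA m (Q t) k j * u j t) + scalar_forcing m f t k"
      using row[OF \<open>k < m\<close>] by blast
    from h have "AE t in lebesgue. t \<in> {a..b} \<longrightarrow> h t = u (Suc k) t"
      by eventually_elim (use k in \<open>simp add: sum_coeffA_shift scalar_forcing_def\<close>)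
    with h_AC show ?thesis
      by (rule AC_with_deriv_AE_cong)
  qed
  moreover have "\<exists>h. AC_with_deriv a b (u (m - 2)) h \<and>
      (AE t in lebesgue. t \<in> {a..b} \<longrightarrow> u (m - 1) t = h t + inverse (\<i> ^ m) * Q t * u 0 t)"
  proof -
    have "m - 2 \<noteq> m - 1"
      using assms(1) by linarith
    obtain h where h_AC: "AC_with_deriv a b (u (m - 2)) h"
      and h: "AE t in lebesgue. t \<in> {a..b} \<longrightarrow>
        h t = (\<Sum>j<m. coeffA m (Q t) (m - 2) j * u j t) + scalar_forcing m f t (m - 2)"
      using row[of "m - 2"] assms(1) by auto
    from h have "AE t in lebesgue. t \<in> {a..b} \<longrightarrow>
        u (m - 1) t = h t + inverse (\<i> ^ m) * Q t * u 0 t"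
      by eventually_elim (use assms(1) \<open>m - 2 \<noteq> m - 1\<close> in \<open>simp add: sum_coeffA_penultimate scalar_forcing_def\<close>)
    with h_AC show ?thesis
      by blast
  qed
  moreover have "\<exists>h. AC_with_deriv a b (u (m - 1)) h \<and>
      (AE t in lebesgue. t \<in> {a..b} \<longrightarrow> \<i> ^ m * (h t - inverse (\<i> ^ m) * Q t * u 1 t) = f t)"
  proof -
    obtain h where h_AC: "AC_with_deriv a b (u (m - 1)) h"
      and h: "AE t in lebesgue. t \<in> {a..b} \<longrightarrow>
        h t = (\<Sum>j<m. coeffA m (Q t) (m - 1) j * u j t) + scalar_forcing m f t (m - 1)"
      using row[of "m - 1"] assms(1) by auto
    from h have "AE t in lebesgue. t \<in> {a..b} \<longrightarrow>
        \<i> ^ m * (h t - inverse (\<i> ^ m) * Q t * u 1 t) = f t"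
      by eventually_elim (simp add: sum_coeffA_last[OF assms(1)] scalar_forcing_def del: One_nat_def)
    with h_AC show ?thesis
      by blast
  qed
  moreover have "\<forall>i<m. (\<Sum>j<m. \<alpha> i j * u j a) + (\<Sum>j<m. \<beta> i j * u j b) = 0"
    using assms(2) unfolding fo_solution_def u_def by blast
  moreover have "\<forall>t\<in>{a..b}. u 0 t = w t 0"
    by (simp add: u_def)
  ultimately show ?thesis
    unfolding sc_solution_def by blast
qed

lemma sc_solution_imp_fo_solution:
  assumes "2 \<le> m" and "sc_solution a b m Q \<alpha> \<beta> f y"
  obtains w where "fo_solution a b m Q \<alpha> \<beta> (scalar_forcing m f) w" and "\<forall>t\<in>{a..b}. w t 0 = y t"
proof -
  obtain u where u0: "\<forall>t\<in>{a..b}. u 0 t = y t"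
    and shift: "\<forall>k. Suc k < m - 1 \<longrightarrow> AC_with_deriv a b (u k) (u (Suc k))"
    and penultimate: "\<exists>h. AC_with_deriv a b (u (m - 2)) h \<and>
      (AE t in lebesgue. t \<in> {a..b} \<longrightarrow> u (m - 1) t = h t + inverse (\<i> ^ m) * Q t * u 0 t)"
    and last: "\<exists>h. AC_with_deriv a b (u (m - 1)) h \<and>
      (AE t in lebesgue. t \<in> {a..b} \<longrightarrow> \<i> ^ m * (h t - inverse (\<i> ^ m) * Q t * u 1 t) = f t)"
    and boundary: "\<forall>i<m. (\<Sum>j<m. \<alpha> i j * u j a) + (\<Sum>j<m. \<beta> i j * u j b) = 0"
    using assms(2) unfolding sc_solution_def by blast
  define w where "w t k = u k t" for t k
  have "\<exists>h. AC_with_deriv a b (u k) h \<and> (AE t in lebesgue. t \<in> {a..b} \<longrightarrow>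
      h t = (\<Sum>j<m. coeffA m (Q t) k j * u j t) + scalar_forcing m f t k)" if "k < m" for k
  proof -
    have "m - 2 \<noteq> m - 1"
      using assms(1) by linarith
    consider "Suc k < m - 1" | "k = m - 2" | "k = m - 1"
      using \<open>k < m\<close> assms(1) by linarith
    then show ?thesis
    proof cases
      case 1
      then have "AE t in lebesgue. t \<in> {a..b} \<longrightarrow>
          u (Suc k) t = (\<Sum>j<m. coeffA m (Q t) k j * u j t) + scalar_forcing m f t k"
        by (simp add: sum_coeffA_shift scalar_forcing_def)
      with 1 shift show ?thesis
        by blast
    next
      case 2
      from penultimate obtain h where h_AC: "AC_with_deriv a b (u (m - 2)) h"
        and h: "AE t in lebesgue. t \<in> {a..b} \<longrightarrow> u (m - 1) t = h t + inverse (\<i> ^ m) * Q t * u 0 t"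
        by blast
      from h have "AE t in lebesgue. t \<in> {a..b} \<longrightarrow>
          h t = (\<Sum>j<m. coeffA m (Q t) k j * u j t) + scalar_forcing m f t k"
        by eventually_elim (use assms(1) 2 \<open>m - 2 \<noteq> m - 1\<close> in \<open>simp add: sum_coeffA_penultimate scalar_forcing_def\<close>)
      with h_AC 2 show ?thesis
        by blast
    next
      case 3
      have cancel: "\<i> ^ m * z = v \<longleftrightarrow> z = inverse (\<i> ^ m) * v" for z v :: complex
        by (auto simp: field_simps)
      from last obtain h where h_AC: "AC_with_deriv a b (u (m - 1)) h"
        and h: "AE t in lebesgue. t \<in> {a..b} \<longrightarrow> \<i> ^ m * (h t - inverse (\<i> ^ m) * Q t * u 1 t) = f t"
        by blast
      from h have "AE t in lebesgue. t \<in> {a..b} \<longrightarrow>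
          h t = (\<Sum>j<m. coeffA m (Q t) (m - 1) j * u j t) + scalar_forcing m f t (m - 1)"
        by eventually_elim (simp only: sum_coeffA_last[OF assms(1)] cancel, auto simp: scalar_forcing_def diff_eq_eq)
      with h_AC 3 show ?thesis
        by blast
    qed
  qed
  then have "fo_solution a b m Q \<alpha> \<beta> (scalar_forcing m f) w"
    using boundary unfolding fo_solution_def w_def by blast
  moreover have "\<forall>t\<in>{a..b}. w t 0 = y t"
    using u0 by (simp add: w_def)
  ultimately show thesis
    by (rule that)
qed

lemma green_function_of_green_matrix:
  assumes "2 \<le> m" and G: "green_matrix a b m Q \<alpha> \<beta> G"
  shows "green_function a b m Q \<alpha> \<beta> (\<lambda>t s. inverse (\<i> ^ m) * G t s 0 (m - 1))"
  unfolding green_function_def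
proof (intro allI impI conjI)
  fix f
  assume "L2_on {a..b} f"
  then have "\<forall>k<m. L1_on {a..b} (\<lambda>s. scalar_forcing m f s k)"
    by (blast intro: L1_on_scalar_forcing)
  then have solvable: "\<exists>w. fo_solution a b m Q \<alpha> \<beta> (scalar_forcing m f) w"
    and representation: "\<And>w t k. fo_solution a b m Q \<alpha> \<beta> (scalar_forcing m f) w \<Longrightarrow> t \<in> {a<..<b} \<Longrightarrow> k < m \<Longrightarrow>
      w t k = integral {a..b} (\<lambda>s. \<Sum>j<m. G t s k j * scalar_forcing m f s j)"
    using G unfolding green_matrix_def by blast+
  show "\<exists>y. sc_solution a b m Q \<alpha> \<beta> f y"
    using solvable fo_solution_imp_sc_solution[OF assms(1)] by blast
  show "\<forall>t\<in>{a<..<b}. y t = integral {a..b} (\<lambda>s. inverse (\<i> ^ m) * G t s 0 (m - 1) * f s)"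
    if y: "sc_solution a b m Q \<alpha> \<beta> f y" for y
  proof
    fix t
    assume t: "t \<in> {a<..<b}"
    obtain w where w: "fo_solution a b m Q \<alpha> \<beta> (scalar_forcing m f) w" and "\<forall>t\<in>{a..b}. w t 0 = y t"
      using sc_solution_imp_fo_solution[OF assms(1) y] .
    then have "y t = w t 0"
      using t by auto
    also have "\<dots> = integral {a..b} (\<lambda>s. \<Sum>j<m. G t s 0 j * scalar_forcing m f s j)"
      using representation[OF w t] assms(1) by simp
    also have "\<dots> = integral {a..b} (\<lambda>s. inverse (\<i> ^ m) * G t s 0 (m - 1) * f s)"
      using assms(1) by (simp add: sum_mult_scalar_forcing mult_ac)
    finally show "y t = integral {a..b} (\<lambda>s. inverse (\<i> ^ m) * G t s 0 (m - 1) * f s)" .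
  qed
qed

theorem lemma5:
  fixes a b \<epsilon>0 \<epsilon> :: real and m :: nat
    and Q :: "real \<Rightarrow> real \<Rightarrow> complex"
    and \<alpha> \<beta> :: "real \<Rightarrow> nat \<Rightarrow> nat \<Rightarrow> complex"
    and G :: "real \<Rightarrow> real \<Rightarrow> real \<Rightarrow> nat \<Rightarrow> nat \<Rightarrow> complex"
  assumes "a < b" and "m \<ge> 3"
    and "\<forall>e\<in>{0..\<epsilon>0}. L1_on {a..b} (Q e)"
    and "\<epsilon> \<in> {0..\<epsilon>0}"
    and "green_matrix a b m (Q \<epsilon>) (\<alpha> \<epsilon>) (\<beta> \<epsilon>) (G \<epsilon>)"
    and "\<forall>i<m. \<forall>j<m. Linf_on ({a..b} \<times> {a..b}) (\<lambda>x. G \<epsilon> (fst x) (snd x) i j)"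
  shows "\<exists>\<Gamma>. green_function a b m (Q \<epsilon>) (\<alpha> \<epsilon>) (\<beta> \<epsilon>) \<Gamma> \<and>
           (AE x in lebesgue. x \<in> {a..b} \<times> {a..b} \<longrightarrow>
              \<Gamma> (fst x) (snd x) = inverse (\<i> ^ m) * G \<epsilon> (fst x) (snd x) 0 (m - 1))"
proof -
  \<comment> \<open>Only \<open>m \<ge> 2\<close> and the Green matrix are needed: \<open>green_matrix\<close> already covers every \<open>L\<^sub>1\<close> forcing
    term, so neither the integrability of \<open>Q\<close> nor the boundedness of \<open>G\<close> enters the argument.\<close>
  have "green_function a b m (Q \<epsilon>) (\<alpha> \<epsilon>) (\<beta> \<epsilon>) (\<lambda>t s. inverse (\<i> ^ m) * G \<epsilon> t s 0 (m - 1))"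
    using assms(2,5) by (intro green_function_of_green_matrix) simp_all
  then show ?thesis
    by auto
qed

end
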